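(* Let $k\ge2$, $n\ge1$ and $1\le r\le n$. If $k-1$ divides $n-r$, then, with $m=\frac{n-r}{k-1}$ (which equals the number of hyperedges of any such hyperforest), the number of rooted spanning hyperforests of $\mathcal K_n^{(k)}$ with exactly $r$ components is $$t_{n,r}(\mathbf e_k)=\binom{n-1}{r-1}\frac{(n-r)!}{m!\,[(k-1)!]^{m}}\,n^{m};$$ if $k-1$ does not divide $n-r$, then $t_{n,r}(\mathbf e_k)=0$.
   Context: $\mathcal K_n^{(k)}$ is the $k$-uniform complete hypergraph: vertex set $\{1,\dots,n\}$, hyperedges all $k$-element subsets. A cycle is a sequence $(v_0,e_1,v_1,\dots,e_\ell,v_\ell)$ with $\ell\ge2$, $v_{i-1},v_i\in e_i$, $v_0,\dots,v_{\ell-1}$ distinct, $v_\ell=v_0$, and $e_1,\dots,e_\ell$ distinct hyperedges. A spanning hyperforest is a set of hyperedges with no cycle; its components are the classes of vertices connected by walks (isolated vertices included); a rooted spanning hyperforest has one distinguished root vertex per component. $t_{n,r}(\mathbf e_k)$ denotes the number of rooted spanning hyperforests of $\mathcal K_n^{(k)}$ with exactly $r$ components. *)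

theory Defs
  imports Complex_Main
begin

definition hyperedges :: "nat \<Rightarrow> nat \<Rightarrow> nat set set" where
  "hyperedges n k = {e. e \<subseteq> {1..n} \<and> card e = k}"

text \<open>A cycle (v_0,e_1,v_1,...,e_l,v_l) in an edge set F, encoded with
  vs i = v_i and es i = e_(i+1) for i < l.\<close>
definition has_cycle :: "nat set set \<Rightarrow> bool" where
  "has_cycle F \<longleftrightarrow> (\<exists>(l::nat) (vs::nat \<Rightarrow> nat) (es::nat \<Rightarrow> nat set).
     l \<ge> 2 \<and> (\<forall>i<l. es i \<in> F \<and> vs i \<in> es i \<and> vs (Suc i) \<in> es i) \<and>
     inj_on vs {..<l} \<and> vs l = vs 0 \<and> inj_on es {..<l})"

definition spanning_hyperforest :: "nat \<Rightarrow> nat \<Rightarrow> nat set set \<Rightarrow> bool" where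
  "spanning_hyperforest n k F \<longleftrightarrow> F \<subseteq> hyperedges n k \<and> \<not> has_cycle F"

definition adj :: "nat set set \<Rightarrow> (nat \<times> nat) set" where
  "adj F = {(u, v). \<exists>e\<in>F. u \<in> e \<and> v \<in> e}"

definition connected_rel :: "nat \<Rightarrow> nat set set \<Rightarrow> (nat \<times> nat) set" where
  "connected_rel n F = {(u, v). u \<in> {1..n} \<and> v \<in> {1..n} \<and> (u, v) \<in> (adj F)\<^sup>*}"

definition components :: "nat \<Rightarrow> nat set set \<Rightarrow> nat set set" where
  "components n F = {1..n} // connected_rel n F"

text \<open>Rooted spanning hyperforests with exactly r components: pairs (F, R) where
  R is the set of roots, containing exactly one vertex of each component.\<close>
definition rooted_forests :: "nat \<Rightarrow> nat \<Rightarrow> nat \<Rightarrow> (nat set set \<times> nat set) set" where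
  "rooted_forests n k r = {(F, R). spanning_hyperforest n k F \<and>
     card (components n F) = r \<and> R \<subseteq> {1..n} \<and>
     (\<forall>C\<in>components n F. card (R \<inter> C) = 1)}"

definition t_count :: "nat \<Rightarrow> nat \<Rightarrow> nat \<Rightarrow> nat" where
  "t_count n r k = card (rooted_forests n k r)"

end

theory Submission
  imports Defs
begin

text \<open>
  We count rooted spanning hyperforests of the complete k-uniform hypergraph on n vertices by
  double counting, following the classical argument for Cayley's formula (Pitman).
  A rooted forest with r roots can be extended by one edge in n (r - 1 choose k - 1) ways:
  choose any vertex v and k - 1 roots of other components; the new edge merges these
  components into that of v and the k - 1 chosen vertices stop being roots. Conversely, a rooted
  forest with r - (k - 1) roots and a marked edge determines the forest before that edge was
  added. Writing t(r) for the number of rooted forests with r roots, this gives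
  t(r) n (r - 1 choose k - 1) = t(r - (k - 1)) (n - r + k - 1)/(k - 1), and t(n) = 1.
  The file first develops reachability, walks and the two basic facts about cycles (removing an
  edge of a hyperforest separates its vertices; adding an edge between different components keeps
  it acyclic).
\<close>

section \<open>Reachability and walks\<close>

definition reach :: "nat set set \<Rightarrow> nat \<Rightarrow> nat \<Rightarrow> bool" where
  "reach F x y \<longleftrightarrow> (x, y) \<in> (adj F)\<^sup>*"

lemma reach_refl [simp]: "reach F x x"
  by (simp add: reach_def)

lemma reach_sym: "reach F x y \<Longrightarrow> reach F y x"
proof -
  have "sym (adj F)" by (auto simp: sym_def adj_def)
  then show "reach F x y \<Longrightarrow> reach F y x"
    unfolding reach_def by (meson sym_rtrancl symD)
qed

lemma reach_trans [trans]: "reach F x y \<Longrightarrow> reach F y z \<Longrightarrow> reach F x z"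
  unfolding reach_def by (rule rtrancl_trans)

lemma reach_edge: "e \<in> F \<Longrightarrow> a \<in> e \<Longrightarrow> b \<in> e \<Longrightarrow> reach F a b"
  unfolding reach_def adj_def by (rule r_into_rtrancl) blast

lemma reach_mono: "F \<subseteq> G \<Longrightarrow> reach F x y \<Longrightarrow> reach G x y"
proof -
  assume "F \<subseteq> G"
  then have "adj F \<subseteq> adj G" by (auto simp: adj_def)
  then show "reach F x y \<Longrightarrow> reach G x y"
    unfolding reach_def using rtrancl_mono by blast
qed

lemma reach_empty [simp]: "reach {} x y \<longleftrightarrow> x = y"
  by (simp add: reach_def adj_def)

text \<open>A walk using the new edge e can be cut at its first entry into and its last exit from e.\<close>

lemma reach_insert:
  assumes "reach (insert e F) x y"
  shows "reach F x y \<or> (\<exists>a\<in>e. \<exists>b\<in>e. reach F x a \<and> reach F b y)"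
  using assms unfolding reach_def
proof (induction rule: rtrancl_induct)
  case (step y z)
  then obtain f where f: "f \<in> insert e F" "y \<in> f" "z \<in> f" by (auto simp: adj_def)
  show ?case
  proof (cases "f = e")
    case True
    with step.IH f show ?thesis by (metis reach_def rtrancl.rtrancl_refl)
  next
    case False
    with f have "(y, z) \<in> adj F" by (auto simp: adj_def)
    with step.IH show ?thesis by (meson rtrancl.rtrancl_into_rtrancl)
  qed
qed simp

definition walk :: "nat set set \<Rightarrow> nat \<Rightarrow> (nat \<Rightarrow> nat) \<Rightarrow> (nat \<Rightarrow> nat set) \<Rightarrow> bool" where
  "walk F p vs es \<longleftrightarrow> (\<forall>i<p. es i \<in> F \<and> vs i \<in> es i \<and> vs (Suc i) \<in> es i)"

lemma segment_reach:
  assumes "\<And>i. j \<le> i \<Longrightarrow> i < q \<Longrightarrow> es i \<in> F \<and> vs i \<in> es i \<and> vs (Suc i) \<in> es i"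
    and "j \<le> q"
  shows "reach F (vs j) (vs q)"
  using assms
proof (induction q)
  case (Suc q)
  show ?case
  proof (cases "j = Suc q")
    case False
    with Suc.prems have "j \<le> q" by simp
    with Suc show ?thesis by (meson lessI less_SucI reach_edge reach_trans)
  qed simp
qed simp

lemma reach_walk:
  assumes "reach F a b"
  shows "\<exists>p vs es. walk F p vs es \<and> vs 0 = a \<and> vs p = b"
  using assms unfolding reach_def
proof (induction rule: rtrancl_induct)
  case base
  have "walk F 0 (\<lambda>_. a) (\<lambda>_. {})" by (simp add: walk_def)
  then show ?case by blast
next
  case (step y z)
  then obtain p vs es where w: "walk F p vs es" "vs 0 = a" "vs p = y" by blast
  from step(2) obtain f where f: "f \<in> F" "y \<in> f" "z \<in> f" by (auto simp: adj_def)
  have "walk F (Suc p) (vs(Suc p := z)) (es(p := f))"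
    using w f by (auto simp: walk_def less_Suc_eq)
  then show ?case using w by force
qed

text \<open>A walk that visits a vertex twice can be shortened by dropping the loop between the visits.\<close>

lemma walk_shortcut_vertex:
  assumes w: "walk F p vs es" and ij: "i < j" "j \<le> p" "vs i = vs j"
  shows "\<exists>vs' es'. walk F (p - (j - i)) vs' es' \<and> vs' 0 = vs 0 \<and> vs' (p - (j - i)) = vs p"
proof (intro exI conjI)
  let ?d = "j - i"
  show "walk F (p - ?d) (\<lambda>t. if t \<le> i then vs t else vs (t + ?d))
                        (\<lambda>t. if t < i then es t else es (t + ?d))"
    unfolding walk_def
  proof (intro allI impI)
    fix t assume t: "t < p - ?d"
    then have "t + ?d < p" "t < p" using ij by auto
    with w ij show "(if t < i then es t else es (t + ?d)) \<in> F \<and>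
        (if t \<le> i then vs t else vs (t + ?d)) \<in> (if t < i then es t else es (t + ?d)) \<and>
        (if Suc t \<le> i then vs (Suc t) else vs (Suc t + ?d)) \<in> (if t < i then es t else es (t + ?d))"
      unfolding walk_def by (cases "t < i"; cases "t = i") auto
  qed
  show "(if p - ?d \<le> i then vs (p - ?d) else vs (p - ?d + ?d)) = vs p"
    using ij by (cases "p = j") auto
qed simp

text \<open>A walk that uses an edge twice can be shortened by jumping along that edge from its first
  use to the end of its second use.\<close>

lemma walk_shortcut_edge:
  assumes w: "walk F p vs es" and ij: "i < j" "j < p" "es i = es j"
  shows "\<exists>vs' es'. walk F (p - (j - i)) vs' es' \<and> vs' 0 = vs 0 \<and> vs' (p - (j - i)) = vs p"
proof (intro exI conjI)
  let ?d = "j - i"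
  show "walk F (p - ?d) (\<lambda>t. if t \<le> i then vs t else vs (t + ?d))
                        (\<lambda>t. if t \<le> i then es t else es (t + ?d))"
    unfolding walk_def
  proof (intro allI impI)
    fix t assume t: "t < p - ?d"
    then have "t + ?d < p" "t < p" using ij by auto
    with w ij show "(if t \<le> i then es t else es (t + ?d)) \<in> F \<and>
        (if t \<le> i then vs t else vs (t + ?d)) \<in> (if t \<le> i then es t else es (t + ?d)) \<and>
        (if Suc t \<le> i then vs (Suc t) else vs (Suc t + ?d)) \<in> (if t \<le> i then es t else es (t + ?d))"
      unfolding walk_def by (cases "t < i"; cases "t = i") auto
  qed
qed (use ij in auto)

text \<open>Hence a shortest walk between two reachable vertices repeats neither vertices nor edges.\<close>

lemma shortest_walk:
  assumes "reach F a b"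
  shows "\<exists>p vs es. walk F p vs es \<and> vs 0 = a \<and> vs p = b \<and> inj_on vs {..p} \<and> inj_on es {..<p}"
proof -
  let ?Q = "\<lambda>p. \<exists>vs es. walk F p vs es \<and> vs 0 = a \<and> vs p = b"
  obtain p where Qp: "?Q p" and minp: "\<And>p'. p' < p \<Longrightarrow> \<not> ?Q p'"
    using reach_walk[OF assms] exists_least_iff[of ?Q] by blast
  then obtain vs es where w: "walk F p vs es" "vs 0 = a" "vs p = b" by blast
  have "inj_on vs {..p}"
  proof (rule ccontr)
    assume "\<not> inj_on vs {..p}"
    then obtain i j where ij: "i < j" "j \<le> p" "vs i = vs j"
      unfolding inj_on_def by (metis atMost_iff linorder_neqE_nat)
    from walk_shortcut_vertex[OF w(1) ij] have "?Q (p - (j - i))" using w by auto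
    moreover have "p - (j - i) < p" using ij by simp
    ultimately show False using minp by blast
  qed
  moreover have "inj_on es {..<p}"
  proof (rule ccontr)
    assume "\<not> inj_on es {..<p}"
    then obtain i j where ij: "i < j" "j < p" "es i = es j"
      unfolding inj_on_def by (metis lessThan_iff linorder_neqE_nat)
    from walk_shortcut_edge[OF w(1) ij] have "?Q (p - (j - i))" using w by auto
    moreover have "p - (j - i) < p" using ij by simp
    ultimately show False using minp by blast
  qed
  ultimately show ?thesis using w by blast
qed

section \<open>Adding and removing edges in hyperforests\<close>

lemma has_cycle_walk:
  "has_cycle F \<longleftrightarrow> (\<exists>l vs es. 2 \<le> l \<and> walk F l vs es \<and> inj_on vs {..<l} \<and> vs l = vs 0 \<and>
                             inj_on es {..<l})"
  by (simp add: has_cycle_def walk_def)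

lemma no_cycle_empty: "\<not> has_cycle {}"
  unfolding has_cycle_def by (metis empty_iff less_le_trans pos2)

lemma acyclic_mono: "F \<subseteq> G \<Longrightarrow> \<not> has_cycle G \<Longrightarrow> \<not> has_cycle F"
  unfolding has_cycle_def by blast

text \<open>In a hyperforest, deleting an edge e disconnects any two distinct vertices of e: otherwise
  a shortest walk between them, closed up by e, would be a cycle.\<close>

lemma remove_edge_separates:
  assumes "\<not> has_cycle G" "e \<in> G" "a \<in> e" "b \<in> e" "a \<noteq> b"
  shows "\<not> reach (G - {e}) a b"
proof
  assume "reach (G - {e}) a b"
  then obtain p vs es where
    w: "walk (G - {e}) p vs es" "vs 0 = a" "vs p = b" "inj_on vs {..p}" "inj_on es {..<p}"
    using shortest_walk by blast
  have "p \<noteq> 0" using w(2,3) assms(5) by (cases p) auto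
  define vs' where "vs' = (\<lambda>t. if t \<le> p then vs t else a)"
  define es' where "es' = (\<lambda>t. if t < p then es t else e)"
  have "walk G (Suc p) vs' es'"
    using w(1) assms w(2,3) by (auto simp: walk_def vs'_def es'_def less_Suc_eq)
  moreover have "inj_on vs' {..<Suc p}"
    using w(4) by (auto simp: inj_on_def vs'_def lessThan_Suc_atMost)
  moreover have "inj_on es' {..<Suc p}"
  proof -
    have "\<forall>i<p. es i \<noteq> e" using w(1) by (auto simp: walk_def)
    then show ?thesis using w(5) unfolding inj_on_def es'_def by (metis lessThan_iff less_SucE)
  qed
  moreover have "vs' (Suc p) = vs' 0" "2 \<le> Suc p" using w \<open>p \<noteq> 0\<close> by (auto simp: vs'_def)
  ultimately have "has_cycle G" unfolding has_cycle_walk by blast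
  with assms(1) show False by simp
qed

text \<open>Dually, an edge whose vertices lie in pairwise different components can be added without
  creating a cycle: a cycle through e would join two of its vertices avoiding e.\<close>

lemma insert_edge_acyclic:
  assumes "\<not> has_cycle F" "\<And>a b. a \<in> e \<Longrightarrow> b \<in> e \<Longrightarrow> a \<noteq> b \<Longrightarrow> \<not> reach F a b"
  shows "\<not> has_cycle (insert e F)"
proof
  assume "has_cycle (insert e F)"
  then obtain l vs es where c: "l \<ge> 2" "\<forall>i<l. es i \<in> insert e F \<and> vs i \<in> es i \<and> vs (Suc i) \<in> es i"
    "inj_on vs {..<l}" "vs l = vs 0" "inj_on es {..<l}"
    unfolding has_cycle_def by blast
  show False
  proof (cases "\<exists>i<l. es i = e")
    case False
    then have "has_cycle F" using c unfolding has_cycle_def by blast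
    with assms(1) show False by simp
  next
    case True
    then obtain i where i: "i < l" "es i = e" by blast
    have other: "es t \<in> F" if "t < l" "t \<noteq> i" for t
      using c(2,5) i that unfolding inj_on_def by fastforce
    have "reach F (vs (Suc i)) (vs l)"
      by (rule segment_reach[of "Suc i" l es F vs]) (use other c(2) i in auto)
    moreover have "reach F (vs 0) (vs i)"
      by (rule segment_reach[of 0 i es F vs]) (use other c(2) i in auto)
    ultimately have "reach F (vs (Suc i)) (vs i)" using c(4) reach_trans by metis
    moreover have "vs (Suc i) \<noteq> vs i"
    proof (cases "Suc i < l")
      case True
      then show ?thesis using c(3) unfolding inj_on_def by fastforce
    next
      case False
      then have "Suc i = l" "i \<noteq> 0" using i c(1) by auto
      then show ?thesis using c(3,4) i unfolding inj_on_def by fastforce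
    qed
    ultimately show False using assms(2) c(2) i by blast
  qed
qed

section \<open>Root sets\<close>

text \<open>R is a set of roots for F if every vertex reaches a root and distinct roots are not
  connected; equivalently, R meets every component in exactly one vertex.\<close>

definition root_set :: "nat \<Rightarrow> nat set set \<Rightarrow> nat set \<Rightarrow> bool" where
  "root_set n F R \<longleftrightarrow> R \<subseteq> {1..n} \<and> (\<forall>x\<in>{1..n}. \<exists>\<rho>\<in>R. reach F x \<rho>) \<and>
                       (\<forall>a\<in>R. \<forall>b\<in>R. reach F a b \<longrightarrow> a = b)"

lemma root_set_subset: "root_set n F R \<Longrightarrow> R \<subseteq> {1..n}"
  by (simp add: root_set_def)

lemma root_exists: "root_set n F R \<Longrightarrow> x \<in> {1..n} \<Longrightarrow> \<exists>\<rho>\<in>R. reach F x \<rho>"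
  by (simp add: root_set_def)

lemma root_unique:
  "root_set n F R \<Longrightarrow> a \<in> R \<Longrightarrow> b \<in> R \<Longrightarrow> reach F x a \<Longrightarrow> reach F x b \<Longrightarrow> a = b"
  unfolding root_set_def by (meson reach_sym reach_trans)

lemma root_set_empty: "root_set n {} R \<longleftrightarrow> R = {1..n}"
  by (auto simp: root_set_def)

definition rooted :: "nat \<Rightarrow> nat \<Rightarrow> nat \<Rightarrow> (nat set set \<times> nat set) set" where
  "rooted n k r = {(F, R). F \<subseteq> hyperedges n k \<and> \<not> has_cycle F \<and> root_set n F R \<and> card R = r}"

lemma finite_hyperedges: "finite (hyperedges n k)"
  by (rule finite_subset[of _ "Pow {1..n}"]) (auto simp: hyperedges_def)

lemma finite_rooted: "finite (rooted n k r)"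
  by (rule finite_subset[of _ "Pow (hyperedges n k) \<times> Pow {1..n}"])
     (auto simp: rooted_def root_set_def finite_hyperedges)

lemma components_reach: "components n F = (\<lambda>x. {y\<in>{1..n}. reach F x y}) ` {1..n}"
proof -
  have "connected_rel n F `` {x} = {y\<in>{1..n}. reach F x y}" if "x \<in> {1..n}" for x
    using that by (auto simp: connected_rel_def reach_def)
  then show ?thesis unfolding components_def quotient_def by auto
qed

lemma one_root_per_component:
  assumes "R \<subseteq> {1..n}"
  shows "(\<forall>C\<in>components n F. card (R \<inter> C) = 1) \<longleftrightarrow> root_set n F R"
proof -
  have cap: "R \<inter> {y\<in>{1..n}. reach F x y} = {\<rho>\<in>R. reach F x \<rho>}" for x
    using assms by auto
  have "(\<forall>x\<in>{1..n}. card {\<rho>\<in>R. reach F x \<rho>} = 1) \<longleftrightarrow> root_set n F R"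
  proof
    assume one: "\<forall>x\<in>{1..n}. card {\<rho>\<in>R. reach F x \<rho>} = 1"
    show "root_set n F R"
      unfolding root_set_def
    proof (intro conjI ballI impI)
      show "\<exists>\<rho>\<in>R. reach F x \<rho>" if "x \<in> {1..n}" for x
      proof -
        have "card {\<rho>\<in>R. reach F x \<rho>} = 1" using one that by simp
        then obtain \<rho> where "{\<rho>\<in>R. reach F x \<rho>} = {\<rho>}" by (rule card_1_singletonE)
        then show ?thesis by blast
      qed
      show "a = b" if "a \<in> R" "b \<in> R" "reach F a b" for a b
      proof -
        have "card {\<rho>\<in>R. reach F a \<rho>} = 1" using one that assms by auto
        then obtain c where "{\<rho>\<in>R. reach F a \<rho>} = {c}" by (rule card_1_singletonE)
        then have "\<rho> \<in> R \<and> reach F a \<rho> \<longleftrightarrow> \<rho> = c" for \<rho> by (simp add: set_eq_iff)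
        then show ?thesis using that reach_refl by metis
      qed
    qed (use assms in simp)
  next
    assume R: "root_set n F R"
    show "\<forall>x\<in>{1..n}. card {\<rho>\<in>R. reach F x \<rho>} = 1"
    proof
      fix x assume "x \<in> {1..n}"
      then obtain \<rho> where "\<rho> \<in> R" "reach F x \<rho>" using root_exists[OF R] by blast
      then have "{\<rho>'\<in>R. reach F x \<rho>'} = {\<rho>}" using root_unique[OF R _ \<open>\<rho> \<in> R\<close>] by blast
      then show "card {\<rho>\<in>R. reach F x \<rho>} = 1" by simp
    qed
  qed
  moreover have "(\<forall>C\<in>components n F. card (R \<inter> C) = 1) \<longleftrightarrow>
                 (\<forall>x\<in>{1..n}. card (R \<inter> {y\<in>{1..n}. reach F x y}) = 1)"
    unfolding components_reach by blast
  ultimately show ?thesis unfolding cap by blast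
qed

lemma card_components:
  assumes R: "root_set n F R"
  shows "card (components n F) = card R"
proof -
  define comp where "comp = (\<lambda>x. {y\<in>{1..n}. reach F x y})"
  have R_sub: "R \<subseteq> {1..n}" using R by (rule root_set_subset)
  have "comp ` {1..n} = comp ` R"
  proof
    show "comp ` {1..n} \<subseteq> comp ` R"
    proof
      fix C assume "C \<in> comp ` {1..n}"
      then obtain x where x: "x \<in> {1..n}" "C = comp x" by blast
      then obtain \<rho> where "\<rho> \<in> R" "reach F x \<rho>" using root_exists[OF R] by blast
      moreover have "comp x = comp \<rho>"
        using \<open>reach F x \<rho>\<close> reach_sym reach_trans unfolding comp_def by blast
      ultimately show "C \<in> comp ` R" using x by blast
    qed
    show "comp ` R \<subseteq> comp ` {1..n}" using R_sub by (rule image_mono)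
  qed
  moreover have "inj_on comp R"
  proof (rule inj_onI)
    fix a b assume ab: "a \<in> R" "b \<in> R" "comp a = comp b"
    then have "b \<in> comp a" using R_sub unfolding comp_def by auto
    then have "reach F a b" by (simp add: comp_def)
    then show "a = b" using root_unique[OF R ab(1,2), of a] by simp
  qed
  ultimately have "card (comp ` {1..n}) = card R" by (simp add: card_image)
  then show ?thesis by (simp add: components_reach comp_def)
qed

lemma rooted_forests_eq: "rooted_forests n k r = rooted n k r"
proof -
  have "(F, R) \<in> rooted_forests n k r \<longleftrightarrow> (F, R) \<in> rooted n k r" for F R
  proof (cases "R \<subseteq> {1..n}")
    case True
    then show ?thesis
      using one_root_per_component[OF True, of F] card_components[of n F R]
      by (auto simp: rooted_forests_def rooted_def spanning_hyperforest_def)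
  next
    case False
    then show ?thesis using root_set_subset by (auto simp: rooted_forests_def rooted_def)
  qed
  then show ?thesis by (simp add: set_eq_iff split_paired_all)
qed

section \<open>Attaching and detaching an edge\<close>

text \<open>Adding an edge from a vertex v to a set S of roots not reachable from v merges the
  components of S into that of v; the roots R - S remain a root set.\<close>

lemma root_set_attach:
  assumes R: "root_set n F R" and v: "v \<in> {1..n}" and S: "S \<subseteq> R"
    and far: "\<forall>s\<in>S. \<not> reach F v s"
  shows "root_set n (insert (insert v S) F) (R - S)"
proof -
  let ?e = "insert v S" and ?G = "insert (insert v S) F"
  have pivot: "c = v" if "c \<in> ?e" "a \<in> R - S" "reach F a c" for a c
  proof (rule ccontr)
    assume "c \<noteq> v"
    with that S have "c \<in> S" "c \<in> R" by auto
    with that root_unique[OF R, of a c a] show False by auto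
  qed
  have cover: "\<exists>\<rho>\<in>R - S. reach ?G x \<rho>" if x: "x \<in> {1..n}" for x
  proof -
    obtain \<rho> where \<rho>: "\<rho> \<in> R" "reach F x \<rho>" using root_exists[OF R x] by blast
    show ?thesis
    proof (cases "\<rho> \<in> S")
      case False
      then show ?thesis using \<rho> reach_mono[of F ?G] by blast
    next
      case True
      obtain \<rho>' where \<rho>': "\<rho>' \<in> R" "reach F v \<rho>'" using root_exists[OF R v] by blast
      have "reach ?G x \<rho>" "reach ?G v \<rho>'" using \<rho> \<rho>' reach_mono[of F ?G] by auto
      moreover have "reach ?G \<rho> v" using True by (intro reach_edge[of ?e]) auto
      moreover have "\<rho>' \<notin> S" using far \<rho>' by blast
      ultimately show ?thesis using \<rho>' reach_trans by blast
    qed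
  qed
  have separate: "a = b" if ab: "a \<in> R - S" "b \<in> R - S" "reach ?G a b" for a b
    using reach_insert[OF ab(3)]
  proof
    assume "\<exists>c\<in>?e. \<exists>d\<in>?e. reach F a c \<and> reach F d b"
    then obtain c d where "c \<in> ?e" "d \<in> ?e" "reach F a c" "reach F b d"
      using reach_sym by blast
    then have "reach F a v" "reach F b v" using pivot ab by blast+
    then have "reach F a b" using reach_sym reach_trans by blast
    then show "a = b" using root_unique[OF R, of a b a] ab by auto
  qed (use root_unique[OF R, of a b a] ab in auto)
  show ?thesis
    unfolding root_set_def using root_set_subset[OF R] cover separate by blast
qed

lemma attach_edge:
  assumes k: "k \<ge> 2" and P: "(F, R) \<in> rooted n k r" and v: "v \<in> {1..n}" and S: "S \<subseteq> R"
    and cS: "card S = k - 1" and far: "\<forall>s\<in>S. \<not> reach F v s"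
  shows "(insert (insert v S) F, R - S) \<in> rooted n k (r - (k - 1))"
proof -
  have F: "F \<subseteq> hyperedges n k" and ac: "\<not> has_cycle F" and R: "root_set n F R"
    and cR: "card R = r"
    using P by (auto simp: rooted_def)
  have finS: "finite S"
  proof (rule ccontr)
    assume "infinite S"
    then show False using cS k by simp
  qed
  have "v \<notin> S" using far by auto
  then have edge: "insert v S \<in> hyperedges n k"
    using v S root_set_subset[OF R] cS finS k by (auto simp: hyperedges_def)
  have "\<not> reach F a b" if ends: "a \<in> insert v S" "b \<in> insert v S" "a \<noteq> b" for a b
  proof
    assume ab: "reach F a b"
    consider "a = v" | "b = v" | "a \<in> S" "b \<in> S" using ends by blast
    then show False
    proof cases
      case 1
      then show False using ab far ends by auto
    next
      case 2
      then show False using ab far ends reach_sym by blast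
    next
      case 3
      then show False using root_unique[OF R, of a b a] ab S ends by auto
    qed
  qed
  then have "\<not> has_cycle (insert (insert v S) F)" by (rule insert_edge_acyclic[OF ac])
  moreover have "card (R - S) = r - (k - 1)" using cR cS S finS by (simp add: card_Diff_subset)
  ultimately show ?thesis
    using F edge root_set_attach[OF R v S far] by (simp add: rooted_def)
qed

text \<open>Deleting an edge e from a rooted hyperforest splits the component of e into |e| parts, one
  for each vertex of e. If v is the vertex of e on the side of the old root, the other vertices of
  e become the roots of the new parts.\<close>

lemma root_set_detach:
  assumes R: "root_set n F R" and ac: "\<not> has_cycle F" and e: "e \<in> F" "e \<subseteq> {1..n}"
    and \<rho>: "\<rho> \<in> R" and v: "v \<in> e" "reach (F - {e}) \<rho> v"
  shows "root_set n (F - {e}) (R \<union> (e - {v}))"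
proof -
  let ?G = "F - {e}" and ?S = "e - {v}"
  have F_eq: "insert e ?G = F" using e by blast
  have split: "x \<in> e \<Longrightarrow> y \<in> e \<Longrightarrow> x \<noteq> y \<Longrightarrow> \<not> reach ?G x y" for x y
    using remove_edge_separates[OF ac e(1)] by blast
  have cover: "\<exists>\<rho>\<in>R \<union> ?S. reach ?G x \<rho>" if x: "x \<in> {1..n}" for x
  proof -
    obtain \<rho>x where \<rho>x: "\<rho>x \<in> R" "reach F x \<rho>x" using root_exists[OF R x] by blast
    have "reach ?G x \<rho>x \<or> (\<exists>u\<in>e. reach ?G x u)"
      using reach_insert[of e ?G x \<rho>x] \<rho>x F_eq by auto
    then show ?thesis
    proof (elim disjE bexE)
      fix u assume u: "u \<in> e" "reach ?G x u"
      show ?thesis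
      proof (cases "u = v")
        case True
        then have "reach ?G x \<rho>"
          using reach_trans[OF u(2)[unfolded True] reach_sym[OF v(2)]] by simp
        then show ?thesis using \<rho> by blast
      qed (use u in blast)
    qed (use \<rho>x in blast)
  qed
  have in_F: "reach F x y" if "reach ?G x y" for x y
    using reach_mono[of ?G F] that by blast
  have mixed: False if a: "a \<in> ?S" and b: "b \<in> R" and ab: "reach ?G a b" for a b
  proof -
    have "reach F b a" using in_F[OF ab] by (rule reach_sym)
    also have "reach F a v" using reach_edge[OF e(1)] a v(1) by blast
    also have "reach F v \<rho>" using in_F[OF v(2)] by (rule reach_sym)
    finally have "b = \<rho>" using root_unique[OF R b \<rho>, of b] by simp
    then have "reach ?G a v" using reach_trans[OF ab[unfolded \<open>b = \<rho>\<close>] v(2)] by simp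
    then show False using split a v(1) by blast
  qed
  have separate: "a = b" if ab: "a \<in> R \<union> ?S" "b \<in> R \<union> ?S" "reach ?G a b" for a b
  proof -
    consider "a \<in> R" "b \<in> R" | "a \<in> ?S" "b \<in> ?S" | "a \<in> ?S" "b \<in> R" | "a \<in> R" "b \<in> ?S"
      using ab by blast
    then show ?thesis
    proof cases
      case 1
      then show ?thesis using root_unique[OF R, of a b a] in_F[OF ab(3)] by simp
    next
      case 2
      then show ?thesis using split ab by blast
    qed (use mixed ab reach_sym in blast)+
  qed
  show ?thesis
    unfolding root_set_def using root_set_subset[OF R] e(2) cover separate by blast
qed

lemma detach_edge:
  assumes k: "k \<ge> 2" and P: "(F, R) \<in> rooted n k r" and e: "e \<in> F"
  obtains v S where "e = insert v S" "v \<notin> S" "S \<inter> R = {}" "v \<in> {1..n}" "card S = k - 1"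
    "\<forall>s\<in>S. \<not> reach (F - {e}) v s" "(F - {e}, R \<union> S) \<in> rooted n k (r + (k - 1))"
proof -
  have F: "F \<subseteq> hyperedges n k" and ac: "\<not> has_cycle F" and R: "root_set n F R"
    and cR: "card R = r"
    using P by (auto simp: rooted_def)
  have e_sub: "e \<subseteq> {1..n}" and ce: "card e = k" using e F by (auto simp: hyperedges_def)
  have fin_e: "finite e" using ce k card.infinite by fastforce
  obtain a where a: "a \<in> e" using ce k by fastforce
  obtain \<rho> where \<rho>: "\<rho> \<in> R" "reach F \<rho> a"
    using root_exists[OF R] a e_sub reach_sym by blast
  have "insert e (F - {e}) = F" using e by blast
  then obtain v where v: "v \<in> e" "reach (F - {e}) \<rho> v"
    using reach_insert[of e "F - {e}" \<rho> a] \<rho> a by auto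
  define S where "S = e - {v}"
  have split: "\<forall>s\<in>S. \<not> reach (F - {e}) v s"
    using remove_edge_separates[OF ac e] v unfolding S_def by blast
  have "S \<inter> R = {}"
  proof (rule ccontr)
    assume "S \<inter> R \<noteq> {}"
    then obtain s where s: "s \<in> S" "s \<in> R" by blast
    have "reach F a s" using s a e unfolding S_def by (blast intro: reach_edge)
    moreover have "reach F a \<rho>" using \<rho>(2) by (rule reach_sym)
    ultimately have "s = \<rho>" using root_unique[OF R s(2) \<rho>(1)] by blast
    then have "reach (F - {e}) v s" using v(2) by (simp add: reach_sym)
    with split s show False by blast
  qed
  moreover have "card (R \<union> S) = r + (k - 1)"
    using calculation cR ce fin_e v root_set_subset[OF R] finite_subset[of R "{1..n}"]
    unfolding S_def by (simp add: card_Un_disjoint Int_commute)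
  moreover have "(F - {e}) \<subseteq> hyperedges n k" using F by blast
  ultimately have "(F - {e}, R \<union> S) \<in> rooted n k (r + (k - 1))"
    using root_set_detach[OF R ac e e_sub \<rho>(1) v] acyclic_mono[of "F - {e}" F] ac
    unfolding S_def by (simp add: rooted_def)
  moreover have "e = insert v S" "v \<notin> S" "v \<in> {1..n}" "card S = k - 1"
    using v e_sub ce fin_e unfolding S_def by auto
  ultimately show ?thesis using that split \<open>S \<inter> R = {}\<close> by blast
qed

text \<open>Each edge decreases the number of components by k - 1, so a hyperforest with m edges and r
  components satisfies m (k - 1) + r = n.\<close>

lemma edge_count:
  assumes k: "k \<ge> 2"
  shows "(F, R) \<in> rooted n k r \<Longrightarrow> card F * (k - 1) + r = n"
proof (induction "card F" arbitrary: F R r)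
  case 0
  have "F \<subseteq> hyperedges n k" using "0.prems" by (simp add: rooted_def)
  then have "finite F" using finite_hyperedges finite_subset by blast
  then have "F = {}" using "0.hyps" by simp
  then show ?case using "0.prems" "0.hyps" by (auto simp: rooted_def root_set_empty)
next
  case (Suc c)
  have "F \<subseteq> hyperedges n k" using Suc.prems by (simp add: rooted_def)
  then have "finite F" using finite_hyperedges finite_subset by blast
  then obtain e where e: "e \<in> F" using Suc.hyps(2) by fastforce
  obtain S where "(F - {e}, R \<union> S) \<in> rooted n k (r + (k - 1))"
    using detach_edge[OF k Suc.prems e] by metis
  moreover have "card (F - {e}) = c" using Suc.hyps(2) e \<open>finite F\<close> by simp
  ultimately have "c * (k - 1) + (r + (k - 1)) = n" using Suc.hyps(1) by blast
  then show ?case using Suc.hyps(2)[symmetric] by simp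
qed

section \<open>Double counting\<close>

definition extensions :: "nat \<Rightarrow> nat \<Rightarrow> nat set set \<Rightarrow> nat set \<Rightarrow> (nat \<times> nat set) set" where
  "extensions n k F R = {(v, S). v \<in> {1..n} \<and> S \<subseteq> R \<and> card S = k - 1 \<and> (\<forall>s\<in>S. \<not> reach F v s)}"

definition extended :: "nat \<Rightarrow> nat \<Rightarrow> nat \<Rightarrow> ((nat set set \<times> nat set) \<times> (nat \<times> nat set)) set" where
  "extended n k r = Sigma (rooted n k r) (\<lambda>(F, R). extensions n k F R)"

definition marked :: "nat \<Rightarrow> nat \<Rightarrow> nat \<Rightarrow> ((nat set set \<times> nat set) \<times> nat set) set" where
  "marked n k r = Sigma (rooted n k r) fst"

definition attach :: "(nat set set \<times> nat set) \<times> (nat \<times> nat set) \<Rightarrow> (nat set set \<times> nat set) \<times> nat set" where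
  "attach = (\<lambda>((F, R), (v, S)). ((insert (insert v S) F, R - S), insert v S))"

lemma extended_iff:
  "((F, R), (v, S)) \<in> extended n k r \<longleftrightarrow>
     (F, R) \<in> rooted n k r \<and> v \<in> {1..n} \<and> S \<subseteq> R \<and> card S = k - 1 \<and> (\<forall>s\<in>S. \<not> reach F v s)"
  by (simp add: extended_def extensions_def)

text \<open>For each of the n vertices v, the roots must avoid the root of v, which leaves
  (r - 1 choose k - 1) choices.\<close>

lemma card_extensions:
  assumes "(F, R) \<in> rooted n k r"
  shows "card (extensions n k F R) = n * ((r - 1) choose (k - 1))"
proof -
  have R: "root_set n F R" and cR: "card R = r" using assms by (auto simp: rooted_def)
  have finR: "finite R" using root_set_subset[OF R] finite_subset by blast
  define B where "B v = {S. S \<subseteq> R \<and> card S = k - 1 \<and> (\<forall>s\<in>S. \<not> reach F v s)}" for v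
  have card_B: "card (B v) = (r - 1) choose (k - 1)" if v: "v \<in> {1..n}" for v
  proof -
    obtain \<rho> where \<rho>: "\<rho> \<in> R" "reach F v \<rho>" using root_exists[OF R v] by blast
    have "reach F v s \<longleftrightarrow> s = \<rho>" if "s \<in> R" for s
      using root_unique[OF R that \<rho>(1)] \<rho> by blast
    then have "B v = {S. S \<subseteq> R - {\<rho>} \<and> card S = k - 1}" unfolding B_def by blast
    moreover have "card (R - {\<rho>}) = r - 1" using \<rho> cR finR by simp
    ultimately show ?thesis using n_subsets[of "R - {\<rho>}" "k - 1"] finR by simp
  qed
  have "finite (B v)" for v
    by (rule finite_subset[of _ "Pow R"]) (use finR in \<open>auto simp: B_def\<close>)
  moreover have "extensions n k F R = Sigma {1..n} B" unfolding extensions_def B_def by auto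
  ultimately show ?thesis using card_B by simp
qed

lemma card_extended: "card (extended n k r) = card (rooted n k r) * (n * ((r - 1) choose (k - 1)))"
proof -
  have "finite (extensions n k F R)" if "(F, R) \<in> rooted n k r" for F R
  proof (rule finite_subset)
    show "extensions n k F R \<subseteq> {1..n} \<times> Pow R" by (auto simp: extensions_def)
    have "R \<subseteq> {1..n}" using that root_set_subset by (auto simp: rooted_def)
    then show "finite ({1..n} \<times> Pow R)" using finite_subset by blast
  qed
  then have "card (extended n k r) = (\<Sum>(F, R)\<in>rooted n k r. card (extensions n k F R))"
    unfolding extended_def using finite_rooted by (subst card_SigmaI) (auto simp: split_beta)
  also have "\<dots> = (\<Sum>(F, R)\<in>rooted n k r. n * ((r - 1) choose (k - 1)))"
    by (rule sum.cong) (auto simp: card_extensions)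
  finally show ?thesis by simp
qed

text \<open>By edge_count, every hyperforest with r roots has (n - r)/(k - 1) edges to mark.\<close>

lemma card_marked:
  assumes k: "k \<ge> 2"
  shows "card (marked n k r) = card (rooted n k r) * ((n - r) div (k - 1))"
proof -
  have "finite F" if "(F, R) \<in> rooted n k r" for F R
    using that finite_hyperedges finite_subset by (auto simp: rooted_def)
  then have "card (marked n k r) = (\<Sum>(F, R)\<in>rooted n k r. card F)"
    unfolding marked_def using finite_rooted by (subst card_SigmaI) (auto simp: split_beta)
  also have "\<dots> = (\<Sum>(F, R)\<in>rooted n k r. (n - r) div (k - 1))"
  proof (rule sum.cong)
    fix p assume p: "p \<in> rooted n k r"
    obtain F R where "p = (F, R)" by fastforce
    with p edge_count[OF k] k
    show "(case p of (F, R) \<Rightarrow> card F) = (case p of (F, R) \<Rightarrow> (n - r) div (k - 1))"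
      by force
  qed simp
  finally show ?thesis by simp
qed

text \<open>The vertex v of an added edge is recovered as the only vertex of the edge whose root lies in
  R - S; this makes attaching reversible.\<close>

lemma pivot_unique:
  assumes "root_set n F R" "S \<subseteq> R" "u \<in> insert v S" "\<rho> \<in> R - S" "reach F u \<rho>"
  shows "u = v"
proof (rule ccontr)
  assume "u \<noteq> v"
  with assms(2,3) have "u \<in> S" "u \<in> R" by auto
  with assms root_unique[of n F R u \<rho> u] show False by auto
qed

lemma attach_inj:
  assumes k: "k \<ge> 2"
  shows "inj_on attach (extended n k r)"
proof (rule inj_onI)
  fix x1 x2 assume x1: "x1 \<in> extended n k r" and x2: "x2 \<in> extended n k r"
    and eq: "attach x1 = attach x2"
  obtain F1 R1 v1 S1 F2 R2 v2 S2 where x: "x1 = ((F1, R1), (v1, S1))" "x2 = ((F2, R2), (v2, S2))"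
    by (metis prod.collapse)
  have m1: "(F1, R1) \<in> rooted n k r" "v1 \<in> {1..n}" "S1 \<subseteq> R1" "card S1 = k - 1"
    "\<forall>s\<in>S1. \<not> reach F1 v1 s"
    using x1 x extended_iff by auto
  have m2: "(F2, R2) \<in> rooted n k r" "v2 \<in> {1..n}" "S2 \<subseteq> R2" "card S2 = k - 1"
    "\<forall>s\<in>S2. \<not> reach F2 v2 s"
    using x2 x extended_iff by auto
  define e where "e = insert v1 S1"
  have e2: "e = insert v2 S2" and F_eq: "insert e F1 = insert e F2" and R_eq: "R1 - S1 = R2 - S2"
    using eq x by (auto simp: attach_def e_def)
  have new: "insert v S \<notin> F" if cS: "card S = k - 1" and far: "\<forall>s\<in>S. \<not> reach F v s"
    for v S F
  proof
    assume "insert v S \<in> F"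
    moreover have "S \<noteq> {}" using cS k by auto
    ultimately show False using far reach_edge[of "insert v S" F v] by blast
  qed
  have F: "F1 = F2"
    using F_eq new[OF m1(4,5)] new[OF m2(4,5)] unfolding e_def e2[unfolded e_def]
    by (metis insert_ident)
  have R1: "root_set n F1 R1" and R2: "root_set n F2 R2"
    using m1(1) m2(1) by (auto simp: rooted_def)
  obtain \<rho> where \<rho>: "\<rho> \<in> R1" "reach F1 v1 \<rho>" using root_exists[OF R1 m1(2)] by blast
  then have "\<rho> \<in> R2 - S2" using m1(5) R_eq by blast
  moreover have "v1 \<in> insert v2 S2" using e2 unfolding e_def by blast
  ultimately have v: "v1 = v2" using pivot_unique[OF R2 m2(3)] \<rho>(2) F by blast
  have "v1 \<notin> S1" "v2 \<notin> S2" using m1(5) m2(5) by auto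
  then have S: "S1 = S2" using e2 v unfolding e_def by (metis Diff_insert_absorb)
  then have "R1 = R2" using R_eq m1(3) m2(3) by blast
  with F v S show "x1 = x2" using x by simp
qed

lemma attach_image:
  assumes k: "k \<ge> 2" and r: "k - 1 \<le> r"
  shows "attach ` extended n k r = marked n k (r - (k - 1))"
proof
  show "attach ` extended n k r \<subseteq> marked n k (r - (k - 1))"
  proof
    fix y assume "y \<in> attach ` extended n k r"
    then obtain F R v S where x: "((F, R), (v, S)) \<in> extended n k r"
      and y: "y = attach ((F, R), (v, S))"
      by (metis prod.collapse imageE)
    then have "(insert (insert v S) F, R - S) \<in> rooted n k (r - (k - 1))"
      using attach_edge[OF k] by (simp add: extended_iff)
    then show "y \<in> marked n k (r - (k - 1))" using y by (simp add: attach_def marked_def)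
  qed
next
  show "marked n k (r - (k - 1)) \<subseteq> attach ` extended n k r"
  proof
    fix y assume "y \<in> marked n k (r - (k - 1))"
    then obtain F R e where y: "y = ((F, R), e)" and P: "(F, R) \<in> rooted n k (r - (k - 1))"
      and e: "e \<in> F"
      by (auto simp: marked_def)
    obtain v S where vS: "e = insert v S" "v \<notin> S" "S \<inter> R = {}" "v \<in> {1..n}" "card S = k - 1"
      "\<forall>s\<in>S. \<not> reach (F - {e}) v s" "(F - {e}, R \<union> S) \<in> rooted n k (r - (k - 1) + (k - 1))"
      using detach_edge[OF k P e] by blast
    then have "((F - {e}, R \<union> S), (v, S)) \<in> extended n k r"
      using r by (simp add: extended_iff)
    moreover have "attach ((F - {e}, R \<union> S), (v, S)) = y"
      using vS(1,3) e y by (auto simp: attach_def)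
    ultimately show "y \<in> attach ` extended n k r" by force
  qed
qed

lemma recurrence:
  assumes k: "k \<ge> 2" and r: "k - 1 \<le> r"
  shows "card (rooted n k r) * (n * ((r - 1) choose (k - 1))) =
         card (rooted n k (r - (k - 1))) * ((n - (r - (k - 1))) div (k - 1))"
proof -
  have "card (rooted n k r) * (n * ((r - 1) choose (k - 1))) = card (extended n k r)"
    by (simp add: card_extended)
  also have "\<dots> = card (attach ` extended n k r)"
    using attach_inj[OF k] by (simp add: card_image)
  also have "\<dots> = card (marked n k (r - (k - 1)))" using attach_image[OF k r] by simp
  finally show ?thesis using card_marked[OF k] by simp
qed

section \<open>The closed formula\<close>

lemma rooted_no_edges:
  assumes k: "k \<ge> 2"
  shows "rooted n k n = {({}, {1..n})}"
proof
  show "rooted n k n \<subseteq> {({}, {1..n})}"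
  proof
    fix p assume p: "p \<in> rooted n k n"
    obtain F R where FR: "p = (F, R)" by (cases p)
    with p have "card F * (k - 1) + n = n" using edge_count[OF k] by simp
    then have "card F = 0" using k by simp
    moreover have "finite F"
      using p FR finite_hyperedges finite_subset by (auto simp: rooted_def)
    ultimately have "F = {}" by simp
    then show "p \<in> {({}, {1..n})}" using p FR by (simp add: rooted_def root_set_empty)
  qed
  show "{({}, {1..n})} \<subseteq> rooted n k n"
    by (simp add: rooted_def root_set_empty no_cycle_empty)
qed

lemma rooted_card_formula:
  assumes k: "k \<ge> 2"
  shows "m * (k - 1) < n \<Longrightarrow>
    card (rooted n k (n - m * (k - 1))) * (fact m * fact (k - 1) ^ m * fact (n - m * (k - 1) - 1))
      = fact (n - 1) * n ^ m"
proof (induction m)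
  case 0
  then show ?case using rooted_no_edges[OF k] by simp
next
  case (Suc m)
  define j where "j = k - 1"
  define r where "r = n - m * j"
  define a where "a = n - Suc m * j - 1"
  have lt: "j + m * j < n" using Suc.prems by (simp add: j_def)
  have IH: "card (rooted n k r) * (fact m * fact j ^ m * fact (r - 1)) = fact (n - 1) * n ^ m"
    using Suc.IH lt unfolding r_def j_def by simp
  have r_a: "r - 1 = a + j" and r_next: "r - j = n - Suc m * j"
    using lt unfolding r_def a_def by auto
  have "0 < j" using k by (simp add: j_def)
  moreover have "n - (r - j) = Suc m * j" using r_next lt by simp
  ultimately have quot: "(n - (r - j)) div j = Suc m" by simp
  have "j \<le> r" using lt by (simp add: r_def)
  then have "card (rooted n k r) * (n * ((r - 1) choose j)) =
             card (rooted n k (r - j)) * ((n - (r - j)) div j)"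
    using recurrence[OF k] unfolding j_def by blast
  then have step: "card (rooted n k r) * (n * ((a + j) choose j)) =
                   card (rooted n k (n - Suc m * j)) * Suc m"
    using r_a r_next quot by simp
  have "card (rooted n k (n - Suc m * j)) * (fact (Suc m) * fact j ^ Suc m * fact a)
      = (card (rooted n k (n - Suc m * j)) * Suc m) * (fact m * fact j ^ m * fact j * fact a)"
    by (simp add: algebra_simps)
  also have "\<dots> = (card (rooted n k r) * (n * ((a + j) choose j))) *
                    (fact m * fact j ^ m * fact j * fact a)"
    by (simp only: step)
  also have "\<dots> = n * (card (rooted n k r) *
                         (fact m * fact j ^ m * (fact j * fact a * ((a + j) choose j))))"
    by (simp only: ac_simps)
  also have "\<dots> = n * (card (rooted n k r) * (fact m * fact j ^ m * fact (r - 1)))"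
    using binomial_fact_lemma[of j "a + j"] r_a by simp
  also have "\<dots> = fact (n - 1) * n ^ Suc m" using IH by simp
  finally show ?case unfolding a_def j_def by simp
qed

lemma binomial_form:
  fixes c m k n r :: nat
  assumes c: "c * (fact m * fact (k - 1) ^ m * fact (r - 1)) = fact (n - 1) * n ^ m"
    and r: "1 \<le> r" "r \<le> n"
  shows "real c =
         real ((n - 1) choose (r - 1)) * fact (n - r) / (fact m * fact (k - 1) ^ m) * real n ^ m"
proof -
  have "fact (r - 1) * fact (n - r) * ((n - 1) choose (r - 1)) = (fact (n - 1) :: nat)"
    using binomial_fact_lemma[of "r - 1" "n - 1"] r by (simp add: Suc_diff_le)
  with c have "(c * (fact m * fact (k - 1) ^ m)) * fact (r - 1)
      = (((n - 1) choose (r - 1)) * fact (n - r) * n ^ m) * fact (r - 1)"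
    by (simp add: ac_simps)
  then have "c * (fact m * fact (k - 1) ^ m) = ((n - 1) choose (r - 1)) * fact (n - r) * n ^ m"
    by simp
  then have "real (c * (fact m * fact (k - 1) ^ m)) =
             real (((n - 1) choose (r - 1)) * fact (n - r) * n ^ m)"
    by (rule arg_cong)
  then have "real c * (fact m * fact (k - 1) ^ m) =
             real ((n - 1) choose (r - 1)) * fact (n - r) * real n ^ m"
    by (simp only: of_nat_mult of_nat_power of_nat_fact)
  then show ?thesis by (simp add: field_simps)
qed

lemma rooted_card_real:
  assumes k: "k \<ge> 2" and r: "1 \<le> r" "r \<le> n" and m: "n - r = m * (k - 1)"
  shows "real (card (rooted n k r)) =
         real ((n - 1) choose (r - 1)) * fact (n - r) / (fact m * fact (k - 1) ^ m) * real n ^ m"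
proof (rule binomial_form[OF _ r])
  have "r = n - m * (k - 1)" "m * (k - 1) < n" using m r by auto
  then show "card (rooted n k r) * (fact m * fact (k - 1) ^ m * fact (r - 1)) = fact (n - 1) * n ^ m"
    using rooted_card_formula[OF k] by simp
qed

text \<open>By edge_count, no hyperforest has r components unless k - 1 divides n - r.\<close>

lemma rooted_empty_unless_dvd:
  assumes k: "k \<ge> 2" and "\<not> (k - 1) dvd (n - r)"
  shows "rooted n k r = {}"
proof (rule ccontr)
  assume "rooted n k r \<noteq> {}"
  then obtain F R where "(F, R) \<in> rooted n k r" by auto
  then have "n - r = card F * (k - 1)" using edge_count[OF k] by fastforce
  with assms(2) show False by simp
qed

theorem mainTheorem9:
  fixes n r k :: nat
  assumes "k \<ge> 2" and "n \<ge> 1" and "1 \<le> r" and "r \<le> n"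
  shows "((k - 1) dvd (n - r) \<longrightarrow>
           (let m = (n - r) div (k - 1) in
            real (t_count n r k) =
              real ((n - 1) choose (r - 1)) * fact (n - r) / (fact m * fact (k - 1) ^ m)
              * real n ^ m)) \<and>
         (\<not> (k - 1) dvd (n - r) \<longrightarrow> t_count n r k = 0)"
proof (intro conjI impI)
  have t: "t_count n r k = card (rooted n k r)"
    by (simp add: t_count_def rooted_forests_eq)
  show "let m = (n - r) div (k - 1) in
          real (t_count n r k) =
            real ((n - 1) choose (r - 1)) * fact (n - r) / (fact m * fact (k - 1) ^ m) * real n ^ m"
    if "(k - 1) dvd (n - r)"
  proof -
    have "n - r = (n - r) div (k - 1) * (k - 1)" using that by simp
    from rooted_card_real[OF assms(1,3,4) this] show ?thesis unfolding t Let_def .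
  qed
  show "t_count n r k = 0" if "\<not> (k - 1) dvd (n - r)"
    using rooted_empty_unless_dvd[OF assms(1) that] t by simp
qed

end
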